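(* Let $\mathcal M$ be the class of multilayer networks with $d$ aspects having a common vertex set $L_0$ and common elementary-layer sets $L_1,\dots,L_d$, and let $p\subseteq\{0,\dots,d\}$ be nonempty. Then for all $M,M'\in\mathcal M$: (1) $M\cong_p M'$ if and only if $f_p(M)\cong f_p(M')$; (2) if $C_G$ is a complete invariant for isomorphism of vertex-colored graphs (i.e. $C_G(G)=C_G(G')\iff G\cong G'$), then $M\mapsto C_G(f_p(M))$ is a complete invariant for $\cong_p$ on $\mathcal M$; (3) $\mathrm{Aut}_p(M)=\{\boldsymbol\zeta\in P_p: g_p^M(\boldsymbol\zeta)\in\mathrm{Aut}(f_p(M))\}$.
   Context: A multilayer network with $d$ aspects is $M=(V_M,E_M,V,\mathbf L)$ with $\mathbf L=(L_1,\dots,L_d)$, $V_M\subseteq V\times L_1\times\dots\times L_d$, $E_M\subseteq V_M\times V_M$; write $L_0=V$ and $\mathbf v=(v_0,\dots,v_d)$. It is assumed that $L_0,\dots,L_d$ are pairwise disjoint and that no tuple in $L_0\times\dots\times L_d$ belongs to any $L_a$. For nonempty $p\subseteq\{0,\dots,d\}$, $P_p=D_0\times\dots\times D_d$ with $D_a=S_{L_a}$ if $a\in p$ and $D_a=\{1_{L_a}\}$ otherwise. For $\boldsymbol\zeta\in P_p$, $\mathbf v^{\boldsymbol\zeta}=(\zeta_0(v_0),\dots,\zeta_d(v_d))$ and $M^{\boldsymbol\zeta}=(\{\mathbf v^{\boldsymbol\zeta}:\mathbf v\in V_M\},\{(\mathbf v^{\boldsymbol\zeta},\mathbf u^{\boldsymbol\zeta}):(\mathbf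 v,\mathbf u)\in E_M\},V,\mathbf L)$. $M\cong_pM'$ means there is $\boldsymbol\zeta\in P_p$ with $M^{\boldsymbol\zeta}=M'$; $\mathrm{Aut}_p(M)=\{\boldsymbol\zeta\in P_p:M^{\boldsymbol\zeta}=M\}$. A vertex-colored graph is $G=(V_c,E_c,\pi,C)$ with $E_c\subseteq V_c\times V_c$, $\pi:V_c\to C$. For a bijection $\gamma:V_c\to V_c'$, $G^\gamma=(\gamma(V_c),\{(\gamma(v),\gamma(u)):(v,u)\in E_c\},\pi\circ\gamma^{-1},C)$; $G\cong G'$ means $G^\gamma=G'$ for some such $\gamma$, and $\mathrm{Aut}(G)$ is the set of bijections $\gamma$ of the vertex set of $G$ with $G^\gamma=G$. Let $\overline p=\{0,\dots,d\}\setminus p=\{\overline p_1<\dots<\overline p_m\}$. Define $f_p(M)=(V_G,E_G,\pi,C)$ by: $V_G=V_M\cup\bigcup_{a\in p}L_a$; $E_G=E_M\cup\{(v_a,\mathbf v):\mathbf v\in V_M,\ a\in p\}$; $C=p\cup(L_{\overline p_1}\times\dots\times L_{\overline p_m})$; $\pi(x)=a$ if $x\in L_a$ with $a\in p$, and $\pi(\mathbf v)=(v_{\overline p_1},\dots,v_{\overline p_m})$ for $\mathbf v\in V_M$. For $\boldsymbol\zeta\in P_p$, $g_p^M(\boldsymbol\zeta)$ is the bijection from $V_G$ to the vertex set of $f_p(M^{\boldsymbol\zeta})$ given by $\mathbf v\mapsto\mathbf v^{\boldsymbol\zeta}$ for $\mathbf v\in V_M$ and $x\mapsto\zeta_a(x)$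 for $x\in L_a$, $a\in p$. *)

theory Defs
  imports "HOL-Combinatorics.Permutations"
begin

(* Elements of the vertex set L_0 and of the elementary-layer sets L_1..L_d have type 'a;
   the layer sets are given by L :: nat => 'a set (L 0 = V). *)

definition tuples :: "nat \<Rightarrow> (nat \<Rightarrow> 'a set) \<Rightarrow> 'a list set" where
  "tuples d L = {v. length v = Suc d \<and> (\<forall>i\<le>d. v ! i \<in> L i)}"

definition mlnet :: "nat \<Rightarrow> (nat \<Rightarrow> 'a set) \<Rightarrow> 'a list set \<times> ('a list \<times> 'a list) set \<Rightarrow> bool" where
  "mlnet d L M \<longleftrightarrow> fst M \<subseteq> tuples d L \<and> snd M \<subseteq> fst M \<times> fst M"

definition Pp :: "nat \<Rightarrow> (nat \<Rightarrow> 'a set) \<Rightarrow> nat set \<Rightarrow> (nat \<Rightarrow> 'a \<Rightarrow> 'a) set" where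
  "Pp d L p = {\<zeta>. \<forall>a. (a \<le> d \<and> a \<in> p \<longrightarrow> \<zeta> a permutes L a) \<and> (\<not> (a \<le> d \<and> a \<in> p) \<longrightarrow> \<zeta> a = id)}"

definition tup_act :: "(nat \<Rightarrow> 'a \<Rightarrow> 'a) \<Rightarrow> 'a list \<Rightarrow> 'a list" where
  "tup_act \<zeta> v = map (\<lambda>i. \<zeta> i (v ! i)) [0..<length v]"

definition ml_act :: "(nat \<Rightarrow> 'a \<Rightarrow> 'a) \<Rightarrow> 'a list set \<times> ('a list \<times> 'a list) set
    \<Rightarrow> 'a list set \<times> ('a list \<times> 'a list) set" where
  "ml_act \<zeta> M = (tup_act \<zeta> ` fst M, (\<lambda>(v, u). (tup_act \<zeta> v, tup_act \<zeta> u)) ` snd M)"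

definition ml_iso_p :: "nat \<Rightarrow> (nat \<Rightarrow> 'a set) \<Rightarrow> nat set \<Rightarrow> 'a list set \<times> ('a list \<times> 'a list) set
    \<Rightarrow> 'a list set \<times> ('a list \<times> 'a list) set \<Rightarrow> bool" where
  "ml_iso_p d L p M M' \<longleftrightarrow> (\<exists>\<zeta>\<in>Pp d L p. ml_act \<zeta> M = M')"

definition Aut_p :: "nat \<Rightarrow> (nat \<Rightarrow> 'a set) \<Rightarrow> nat set \<Rightarrow> 'a list set \<times> ('a list \<times> 'a list) set
    \<Rightarrow> (nat \<Rightarrow> 'a \<Rightarrow> 'a) set" where
  "Aut_p d L p M = {\<zeta>\<in>Pp d L p. ml_act \<zeta> M = M}"

type_synonym ('v, 'c) cgraph = "'v set \<times> ('v \<times> 'v) set \<times> ('v \<Rightarrow> 'c) \<times> 'c set"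

definition cg_wf :: "('v, 'c) cgraph \<Rightarrow> bool" where
  "cg_wf G = (case G of (V, E, \<pi>, C) \<Rightarrow>
     E \<subseteq> V \<times> V \<and> \<pi> ` V \<subseteq> C \<and> (\<forall>x. x \<notin> V \<longrightarrow> \<pi> x = undefined))"

definition cg_act :: "('v \<Rightarrow> 'v) \<Rightarrow> ('v, 'c) cgraph \<Rightarrow> ('v, 'c) cgraph" where
  "cg_act \<gamma> G = (case G of (V, E, \<pi>, C) \<Rightarrow>
     (\<gamma> ` V, (\<lambda>(v, u). (\<gamma> v, \<gamma> u)) ` E, (\<lambda>y\<in>\<gamma> ` V. \<pi> (inv_into V \<gamma> y)), C))"

definition cg_iso :: "('v, 'c) cgraph \<Rightarrow> ('v, 'c) cgraph \<Rightarrow> bool" where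
  "cg_iso G G' \<longleftrightarrow> (\<exists>\<gamma>. bij_betw \<gamma> (fst G) (fst G') \<and> cg_act \<gamma> G = G')"

definition cg_Aut :: "('v, 'c) cgraph \<Rightarrow> ('v \<Rightarrow> 'v) set" where
  "cg_Aut G = {\<gamma>. bij_betw \<gamma> (fst G) (fst G) \<and> cg_act \<gamma> G = G}"

definition pbar :: "nat \<Rightarrow> nat set \<Rightarrow> nat list" where
  "pbar d p = filter (\<lambda>i. i \<notin> p) [0..<Suc d]"

(* graph vertices: Inl v for node-layer tuples, Inr x for elementary layers / vertices;
   colors: Inl a for a in p, Inr (v_pbar1,...,v_pbarm) *)
definition f_p :: "nat \<Rightarrow> (nat \<Rightarrow> 'a set) \<Rightarrow> nat set \<Rightarrow> 'a list set \<times> ('a list \<times> 'a list) set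
    \<Rightarrow> ('a list + 'a, nat + 'a list) cgraph" where
  "f_p d L p M =
    (let VG = Inl ` fst M \<union> Inr ` (\<Union>a\<in>p. L a)
     in (VG,
         (\<lambda>(v, u). (Inl v, Inl u)) ` snd M \<union> {(Inr (v ! a), Inl v) | v a. v \<in> fst M \<and> a \<in> p},
         (\<lambda>x\<in>VG. case x of
             Inl v \<Rightarrow> Inr (map (\<lambda>i. v ! i) (pbar d p))
           | Inr y \<Rightarrow> Inl (THE a. a \<in> p \<and> y \<in> L a)),
         Inl ` p \<union> Inr ` {w. length w = length (pbar d p) \<and>
                            (\<forall>j<length (pbar d p). w ! j \<in> L (pbar d p ! j))}))"

definition g_p :: "nat \<Rightarrow> (nat \<Rightarrow> 'a set) \<Rightarrow> nat set \<Rightarrow> (nat \<Rightarrow> 'a \<Rightarrow> 'a) \<Rightarrow> ('a list + 'a \<Rightarrow> 'a list + 'a)" where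
  "g_p d L p \<zeta> x = (case x of
      Inl v \<Rightarrow> Inl (tup_act \<zeta> v)
    | Inr y \<Rightarrow> Inr (if \<exists>a\<in>p. y \<in> L a then \<zeta> (THE a. a \<in> p \<and> y \<in> L a) y else y))"

end

theory Submission
  imports Defs
begin

text \<open>
  The graph \<open>f_p M\<close> records the aspects in \<open>p\<close> by vertices of their own, each elementary
  layer \<open>x \<in> L a\<close> being joined to the node-layer tuples whose \<open>a\<close>-th entry is \<open>x\<close>, and the
  remaining aspects in the colours of the tuples. A colour-preserving isomorphism
  \<open>f_p M \<cong> f_p M'\<close> therefore maps every layer class \<open>L a\<close>, \<open>a \<in> p\<close>, onto itself and so
  restricts to permutations \<open>\<zeta>\<^sub>a\<close>; the edges \<open>(v\<^sub>a, v)\<close> then force it to send the tuple \<open>v\<close> to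
  \<open>v\<^sup>\<zeta>\<close>, while the colours pin down the coordinates outside \<open>p\<close>. Conversely \<open>g_p \<zeta>\<close> is always
  an isomorphism \<open>f_p M \<cong> f_p M\<^sup>\<zeta>\<close>. As \<open>f_p\<close> is injective, isomorphisms and automorphisms
  correspond exactly, and the statement about complete invariants is immediate.
\<close>

lemma tup_act_length [simp]: "length (tup_act z v) = length v"
  by (simp add: tup_act_def)

lemma tup_act_nth [simp]: "i < length v \<Longrightarrow> tup_act z v ! i = z i (v ! i)"
  by (simp add: tup_act_def)

lemma inj_tup_act: "(\<And>i. inj (z i)) \<Longrightarrow> inj (tup_act z)"
  by (rule injI) (metis injD nth_equalityI tup_act_length tup_act_nth)

lemma Pp_inj: "z \<in> Pp d L p \<Longrightarrow> inj (z a)"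
  unfolding Pp_def by (cases "a \<le> d \<and> a \<in> p") (auto dest: permutes_inj)

lemma Pp_id: "z \<in> Pp d L p \<Longrightarrow> a \<notin> p \<Longrightarrow> z a = id"
  by (auto simp: Pp_def)

lemma set_pbar: "set (pbar d p) = {i. i \<le> d \<and> i \<notin> p}"
  unfolding pbar_def set_filter set_upt by auto

lemma mlnet_nth: "mlnet d L M \<Longrightarrow> v \<in> fst M \<Longrightarrow> i \<le> d \<Longrightarrow> v ! i \<in> L i"
  and mlnet_length: "mlnet d L M \<Longrightarrow> v \<in> fst M \<Longrightarrow> length v = Suc d"
  by (auto simp: mlnet_def tuples_def)

lemma cg_act_eq_iff:
  assumes "bij_betw \<gamma> V V'" and "\<pi>' \<in> extensional V'"
  shows "cg_act \<gamma> (V, E, \<pi>, C) = (V', E', \<pi>', C') \<longleftrightarrow>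
    (\<lambda>(v, u). (\<gamma> v, \<gamma> u)) ` E = E' \<and> (\<forall>x\<in>V. \<pi>' (\<gamma> x) = \<pi> x) \<and> C = C'"
proof -
  have img: "\<gamma> ` V = V'" and inj: "inj_on \<gamma> V"
    using assms(1) by (auto simp: bij_betw_def)
  have "(\<lambda>y\<in>V'. \<pi> (inv_into V \<gamma> y)) = \<pi>' \<longleftrightarrow> (\<forall>x\<in>V. \<pi>' (\<gamma> x) = \<pi> x)"
  proof
    assume "(\<lambda>y\<in>V'. \<pi> (inv_into V \<gamma> y)) = \<pi>'"
    then show "\<forall>x\<in>V. \<pi>' (\<gamma> x) = \<pi> x"
      using img inj by auto
  next
    assume "\<forall>x\<in>V. \<pi>' (\<gamma> x) = \<pi> x"
    then show "(\<lambda>y\<in>V'. \<pi> (inv_into V \<gamma> y)) = \<pi>'"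
      using img inj assms(2) by (auto simp: fun_eq_iff extensional_def)
  qed
  then show ?thesis
    by (simp add: cg_act_def img)
qed

lemma cg_act_cong:
  assumes "E \<subseteq> V \<times> V" and "\<And>x. x \<in> V \<Longrightarrow> \<gamma> x = \<delta> x"
  shows "cg_act \<gamma> (V, E, \<pi>, C) = cg_act \<delta> (V, E, \<pi>, C)"
proof -
  have "(\<lambda>(v, u). (\<gamma> v, \<gamma> u)) ` E = (\<lambda>(v, u). (\<delta> v, \<delta> u)) ` E"
    using assms by (intro image_cong) auto
  moreover have "inv_into V \<gamma> = inv_into V \<delta>"
    using assms(2) by (auto simp: inv_into_def fun_eq_iff intro!: arg_cong[where f = Eps])
  ultimately show ?thesis
    using assms(2) by (simp add: cg_act_def cong: image_cong)
qed

lemma bij_betw_colour_class: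
  assumes "bij_betw \<gamma> V V'" and "\<And>x. x \<in> V \<Longrightarrow> \<pi>' (\<gamma> x) = \<pi> x"
  shows "bij_betw \<gamma> {x \<in> V. \<pi> x = c} {x \<in> V'. \<pi>' x = c}"
proof (rule bij_betw_subset[OF assms(1)])
  show "\<gamma> ` {x \<in> V. \<pi> x = c} = {x \<in> V'. \<pi>' x = c}"
    using assms by (fastforce simp: bij_betw_def)
qed auto

definition fp_vertices :: "(nat \<Rightarrow> 'a set) \<Rightarrow> nat set \<Rightarrow> 'a list set \<times> ('a list \<times> 'a list) set
    \<Rightarrow> ('a list + 'a) set" where
  "fp_vertices L p M = Inl ` fst M \<union> Inr ` (\<Union>a\<in>p. L a)"

definition fp_edges :: "nat set \<Rightarrow> 'a list set \<times> ('a list \<times> 'a list) set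
    \<Rightarrow> (('a list + 'a) \<times> ('a list + 'a)) set" where
  "fp_edges p M = (\<lambda>(v, u). (Inl v, Inl u)) ` snd M \<union> (\<lambda>(v, a). (Inr (v ! a), Inl v)) ` (fst M \<times> p)"

definition fp_colour :: "nat \<Rightarrow> (nat \<Rightarrow> 'a set) \<Rightarrow> nat set \<Rightarrow> 'a list + 'a \<Rightarrow> nat + 'a list" where
  "fp_colour d L p x = (case x of
      Inl v \<Rightarrow> Inr (map (\<lambda>i. v ! i) (pbar d p))
    | Inr y \<Rightarrow> Inl (THE a. a \<in> p \<and> y \<in> L a))"

definition fp_colours :: "nat \<Rightarrow> (nat \<Rightarrow> 'a set) \<Rightarrow> nat set \<Rightarrow> (nat + 'a list) set" where
  "fp_colours d L p = Inl ` p \<union> Inr ` {w. length w = length (pbar d p) \<and>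
                            (\<forall>j<length (pbar d p). w ! j \<in> L (pbar d p ! j))}"

lemma f_p_eq:
  "f_p d L p M = (fp_vertices L p M, fp_edges p M,
     restrict (fp_colour d L p) (fp_vertices L p M), fp_colours d L p)"
  unfolding f_p_def Let_def fp_vertices_def fp_edges_def fp_colour_def[abs_def] fp_colours_def
  by auto

lemma fst_f_p [simp]: "fst (f_p d L p M) = fp_vertices L p M"
  by (simp add: f_p_eq)

lemma inj_f_p: "inj (f_p d L p)"
proof (rule injI)
  fix M M' :: "'a list set \<times> ('a list \<times> 'a list) set"
  assume "f_p d L p M = f_p d L p M'"
  then have "fp_vertices L p M = fp_vertices L p M'" "fp_edges p M = fp_edges p M'"
    by (simp_all add: f_p_eq)
  moreover have "fst N = {v. Inl v \<in> fp_vertices L p N}"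
    and "snd N = {(v, u). (Inl v, Inl u) \<in> fp_edges p N}" for N :: "'a list set \<times> ('a list \<times> 'a list) set"
    by (auto simp: fp_vertices_def fp_edges_def)
  ultimately show "M = M'"
    by (metis prod_eq_iff)
qed

text \<open>The permutations \<open>\<zeta>\<close> read off from an isomorphism \<open>\<gamma> : f_p M \<cong> f_p M'\<close>, so that \<open>\<gamma> = g_p \<zeta>\<close>.\<close>

definition layer_perm_of :: "(nat \<Rightarrow> 'a set) \<Rightarrow> nat set \<Rightarrow> ('a list + 'a \<Rightarrow> 'a list + 'a)
    \<Rightarrow> nat \<Rightarrow> 'a \<Rightarrow> 'a" where
  "layer_perm_of L p \<gamma> a y = (if a \<in> p \<and> y \<in> L a then projr (\<gamma> (Inr y)) else y)"

locale disjoint_layers =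
  fixes d :: nat and L :: "nat \<Rightarrow> 'a set" and p :: "nat set"
  assumes layers_disjoint: "\<And>a b. a \<le> d \<Longrightarrow> b \<le> d \<Longrightarrow> a \<noteq> b \<Longrightarrow> L a \<inter> L b = {}"
    and p_subset: "p \<subseteq> {..d}"
begin

lemma layer_unique: "a \<in> p \<Longrightarrow> b \<in> p \<Longrightarrow> y \<in> L a \<Longrightarrow> y \<in> L b \<Longrightarrow> a = b"
  using layers_disjoint[of a b] p_subset by auto

lemma the_layer: "a \<in> p \<Longrightarrow> y \<in> L a \<Longrightarrow> (THE b. b \<in> p \<and> y \<in> L b) = a"
  using layer_unique by blast

lemma fp_colour_Inr: "a \<in> p \<Longrightarrow> y \<in> L a \<Longrightarrow> fp_colour d L p (Inr y) = Inl a"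
  by (simp add: fp_colour_def the_layer)

lemma Pp_permutes: "z \<in> Pp d L p \<Longrightarrow> a \<in> p \<Longrightarrow> z a permutes L a"
  using p_subset by (auto simp: Pp_def)

lemma g_p_Inl: "g_p d L p z (Inl v) = Inl (tup_act z v)"
  by (simp add: g_p_def)

lemma g_p_Inr: "a \<in> p \<Longrightarrow> y \<in> L a \<Longrightarrow> g_p d L p z (Inr y) = Inr (z a y)"
  by (auto simp: g_p_def the_layer)

lemma fp_edges_subset:
  assumes M: "mlnet d L M" shows "fp_edges p M \<subseteq> fp_vertices L p M \<times> fp_vertices L p M"
proof -
  have "Inr (v ! a) \<in> fp_vertices L p M" if "v \<in> fst M" "a \<in> p" for v a
  proof -
    have "v ! a \<in> L a"
      using that p_subset mlnet_nth[OF M] by auto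
    then show ?thesis
      using that by (auto simp: fp_vertices_def)
  qed
  then show ?thesis
    using M by (auto simp: mlnet_def fp_edges_def fp_vertices_def)
qed

lemma cg_wf_f_p:
  assumes M: "mlnet d L M" shows "cg_wf (f_p d L p M)"
proof -
  have "fp_colour d L p x \<in> fp_colours d L p" if "x \<in> fp_vertices L p M" for x
  proof (cases x)
    case (Inl v)
    with that have "v \<in> fst M"
      by (auto simp: fp_vertices_def)
    moreover have "pbar d p ! j \<le> d" if "j < length (pbar d p)" for j
      using nth_mem[OF that] by (simp add: set_pbar)
    ultimately show ?thesis
      using Inl mlnet_nth[OF M] by (simp add: fp_colour_def fp_colours_def)
  next
    case (Inr y)
    with that obtain a where "a \<in> p" "y \<in> L a"
      by (auto simp: fp_vertices_def)
    then show ?thesis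
      using Inr by (simp add: fp_colour_Inr fp_colours_def)
  qed
  then show ?thesis
    using fp_edges_subset[OF M] by (auto simp: cg_wf_def f_p_eq)
qed

context
  fixes z assumes z: "z \<in> Pp d L p"
begin

lemma bij_betw_g_p_layer:
  assumes a: "a \<in> p" shows "bij_betw (g_p d L p z) (Inr ` L a) (Inr ` L a)"
proof -
  have perm: "bij_betw (z a) (L a) (L a)"
    using Pp_permutes[OF z a] by (rule permutes_imp_bij)
  have "inj_on (g_p d L p z) (Inr ` L a)"
    using perm by (auto simp: inj_on_def bij_betw_def g_p_Inr[OF a])
  moreover have "g_p d L p z ` Inr ` L a = Inr ` z a ` L a"
    unfolding image_image by (rule image_cong) (simp_all add: g_p_Inr[OF a])
  ultimately show ?thesis
    using perm by (simp add: bij_betw_def)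
qed

lemma bij_betw_g_p:
  "bij_betw (g_p d L p z) (fp_vertices L p M) (fp_vertices L p (ml_act z M))"
proof -
  have "bij_betw (g_p d L p z) (Inl ` fst M) (Inl ` tup_act z ` fst M)"
    using inj_tup_act[OF Pp_inj[OF z]]
    by (auto simp: bij_betw_def inj_on_def g_p_Inl image_image dest: injD)
  moreover have "bij_betw (g_p d L p z) (\<Union>a\<in>p. Inr ` L a) (\<Union>a\<in>p. Inr ` L a)"
    using layer_unique
    by (intro bij_betw_UNION_disjoint bij_betw_g_p_layer) (auto simp: disjoint_family_on_def)
  ultimately show ?thesis
    unfolding fp_vertices_def image_UN by (auto simp: ml_act_def intro!: bij_betw_combine)
qed

lemma g_p_edges:
  assumes M: "mlnet d L M"
  shows "(\<lambda>(x, y). (g_p d L p z x, g_p d L p z y)) ` fp_edges p M = fp_edges p (ml_act z M)"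
proof -
  let ?g = "\<lambda>(x, y). (g_p d L p z x, g_p d L p z y)"
  have "?g ` (\<lambda>(v, u). (Inl v, Inl u)) ` snd M
      = (\<lambda>(v, u). (Inl v, Inl u)) ` (\<lambda>(v, u). (tup_act z v, tup_act z u)) ` snd M"
    unfolding image_image by (rule image_cong) (auto simp: g_p_Inl)
  moreover have "?g ` (\<lambda>(v, a). (Inr (v ! a), Inl v)) ` (fst M \<times> p)
      = (\<lambda>(v, a). (Inr (v ! a), Inl v)) ` (\<lambda>(v, a). (tup_act z v, a)) ` (fst M \<times> p)"
    unfolding image_image
  proof (rule image_cong)
    fix x assume "x \<in> fst M \<times> p"
    then obtain v a where x: "x = (v, a)" "v \<in> fst M" "a \<in> p"
      by blast
    with p_subset have "v ! a \<in> L a" "a < length v"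
      using mlnet_nth[OF M] mlnet_length[OF M] by auto
    then show "?g ((\<lambda>(v, a). (Inr (v ! a), Inl v)) x)
        = (\<lambda>(v, a). (Inr (v ! a), Inl v)) ((\<lambda>(v, a). (tup_act z v, a)) x)"
      using x by (simp add: g_p_Inr g_p_Inl)
  qed simp
  moreover have "(\<lambda>(v, a). (tup_act z v, a)) ` (fst M \<times> p) = tup_act z ` fst M \<times> p"
    by force
  ultimately show ?thesis
    by (simp add: fp_edges_def ml_act_def image_Un)
qed

lemma fp_colour_g_p:
  assumes M: "mlnet d L M" and x: "x \<in> fp_vertices L p M"
  shows "fp_colour d L p (g_p d L p z x) = fp_colour d L p x"
proof (cases x)
  case (Inl v)
  with x have "v \<in> fst M"
    by (auto simp: fp_vertices_def)
  then have "tup_act z v ! i = v ! i" if "i \<in> set (pbar d p)" for i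
    using that mlnet_length[OF M] Pp_id[OF z] by (auto simp: set_pbar)
  then show ?thesis
    using Inl by (simp add: g_p_Inl fp_colour_def)
next
  case (Inr y)
  with x obtain a where a: "a \<in> p" "y \<in> L a"
    by (auto simp: fp_vertices_def)
  then have "z a y \<in> L a"
    using Pp_permutes[OF z] by (simp add: permutes_in_image)
  then show ?thesis
    using Inr a by (simp add: g_p_Inr fp_colour_Inr)
qed

lemma cg_act_g_p:
  assumes M: "mlnet d L M"
  shows "cg_act (g_p d L p z) (f_p d L p M) = f_p d L p (ml_act z M)"
  unfolding f_p_eq
proof (intro cg_act_eq_iff[THEN iffD2, OF bij_betw_g_p restrict_extensional] conjI ballI)
  fix x assume "x \<in> fp_vertices L p M"
  with bij_betwE[OF bij_betw_g_p] fp_colour_g_p[OF M] show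
    "restrict (fp_colour d L p) (fp_vertices L p (ml_act z M)) (g_p d L p z x)
      = restrict (fp_colour d L p) (fp_vertices L p M) x"
    by simp
qed (simp_all add: g_p_edges[OF M])

end


lemma fp_colour_class_layer:
  assumes a: "a \<in> p"
  shows "{x \<in> fp_vertices L p M. fp_colour d L p x = Inl a} = Inr ` L a"
proof -
  have "x \<in> Inr ` L a" if "x \<in> fp_vertices L p M" "fp_colour d L p x = Inl a" for x
    using that layer_unique a by (auto simp: fp_vertices_def fp_colour_def the_layer)
  moreover have "Inr ` L a \<subseteq> fp_vertices L p M"
    using a by (auto simp: fp_vertices_def)
  ultimately show ?thesis
    using a by (auto simp: fp_colour_Inr)
qed

context
  fixes M M' \<gamma>
  assumes M: "mlnet d L M" and M': "mlnet d L M'"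
    and bij: "bij_betw \<gamma> (fp_vertices L p M) (fp_vertices L p M')"
    and act: "cg_act \<gamma> (f_p d L p M) = f_p d L p M'"
begin

lemma iso_edges: "(\<lambda>(x, y). (\<gamma> x, \<gamma> y)) ` fp_edges p M = fp_edges p M'"
  and iso_colour: "x \<in> fp_vertices L p M \<Longrightarrow> fp_colour d L p (\<gamma> x) = fp_colour d L p x"
  using act bij_betwE[OF bij] unfolding f_p_eq cg_act_eq_iff[OF bij restrict_extensional] by auto

lemma iso_layer:
  assumes a: "a \<in> p" shows "bij_betw \<gamma> (Inr ` L a) (Inr ` L a)"
proof -
  have "bij_betw \<gamma> {x \<in> fp_vertices L p M. fp_colour d L p x = Inl a}
      {x \<in> fp_vertices L p M'. fp_colour d L p x = Inl a}"
    using iso_colour by (rule bij_betw_colour_class[OF bij])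
  then show ?thesis
    unfolding fp_colour_class_layer[OF a] .
qed

lemma iso_Inr:
  assumes "a \<in> p" "y \<in> L a"
  shows "\<gamma> (Inr y) = Inr (layer_perm_of L p \<gamma> a y)" and "layer_perm_of L p \<gamma> a y \<in> L a"
  using bij_betwE[OF iso_layer[OF assms(1)]] assms by (auto simp: layer_perm_of_def)

lemma layer_perm_of_permutes:
  assumes a: "a \<in> p" shows "layer_perm_of L p \<gamma> a permutes L a"
proof (rule bij_imp_permutes)
  have "inj_on (layer_perm_of L p \<gamma> a) (L a)"
    using iso_layer[OF a] iso_Inr[OF a] by (auto simp: bij_betw_def inj_on_def)
  moreover have "layer_perm_of L p \<gamma> a ` L a = L a"
  proof
    show "layer_perm_of L p \<gamma> a ` L a \<subseteq> L a"
      using iso_Inr(2)[OF a] by auto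
    show "L a \<subseteq> layer_perm_of L p \<gamma> a ` L a"
    proof
      fix w assume "w \<in> L a"
      then have "Inr w \<in> \<gamma> ` Inr ` L a"
        using bij_betw_imp_surj_on[OF iso_layer[OF a]] by simp
      then obtain y where "y \<in> L a" "\<gamma> (Inr y) = Inr w"
        by auto
      then show "w \<in> layer_perm_of L p \<gamma> a ` L a"
        using iso_Inr(1)[OF a] by force
    qed
  qed
  ultimately show "bij_betw (layer_perm_of L p \<gamma> a) (L a) (L a)"
    by (simp add: bij_betw_def)
qed (simp add: layer_perm_of_def)

lemma layer_perm_of_Pp: "layer_perm_of L p \<gamma> \<in> Pp d L p"
  unfolding Pp_def using layer_perm_of_permutes p_subset
  by (auto simp: layer_perm_of_def fun_eq_iff)

lemma iso_Inl:
  assumes v: "v \<in> fst M"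
  shows "\<gamma> (Inl v) = Inl (tup_act (layer_perm_of L p \<gamma>) v)"
proof -
  let ?\<zeta> = "layer_perm_of L p \<gamma>"
  have vertex: "Inl v \<in> fp_vertices L p M"
    using v by (simp add: fp_vertices_def)
  have colour: "fp_colour d L p (\<gamma> (Inl v)) = Inr (map (\<lambda>i. v ! i) (pbar d p))"
    using iso_colour[OF vertex] by (simp add: fp_colour_def)
  obtain w where w: "\<gamma> (Inl v) = Inl w" "w \<in> fst M'"
    using bij_betw_apply[OF bij vertex] colour by (auto simp: fp_vertices_def fp_colour_def)
  have "w = tup_act ?\<zeta> v"
  proof (rule nth_equalityI)
    show "length w = length (tup_act ?\<zeta> v)"
      using mlnet_length[OF M v] mlnet_length[OF M' w(2)] by simp
    fix i assume "i < length w"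
    then have i: "i \<le> d"
      using mlnet_length[OF M' w(2)] by simp
    show "w ! i = tup_act ?\<zeta> v ! i"
    proof (cases "i \<in> p")
      case True
      \<comment> \<open>the edge \<open>(v\<^sub>i, v)\<close> goes to an edge \<open>(\<zeta>\<^sub>i v\<^sub>i, w)\<close>; disjointness of layers identifies its index\<close>
      have "(Inr (v ! i), Inl v) \<in> fp_edges p M"
        using v True by (auto simp: fp_edges_def)
      then have "(Inr (?\<zeta> i (v ! i)), Inl w) \<in> fp_edges p M'"
        using iso_edges iso_Inr(1)[OF True mlnet_nth[OF M v i]] w(1) by force
      then obtain b where b: "b \<in> p" "?\<zeta> i (v ! i) = w ! b"
        by (auto simp: fp_edges_def)
      then have "b = i"
        using layer_unique[OF b(1) True] iso_Inr(2)[OF True mlnet_nth[OF M v i]]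
          p_subset mlnet_nth[OF M' w(2)] by auto
      then show ?thesis
        using b mlnet_length[OF M v] i by simp
    next
      case False
      then have "i \<in> set (pbar d p)"
        using i by (simp add: set_pbar)
      moreover have "map (\<lambda>i. w ! i) (pbar d p) = map (\<lambda>i. v ! i) (pbar d p)"
        using colour w(1) by (simp add: fp_colour_def)
      ultimately show ?thesis
        using False mlnet_length[OF M v] i by (simp add: layer_perm_of_def)
    qed
  qed
  then show ?thesis
    using w(1) by simp
qed

lemma iso_eq_g_p: "x \<in> fp_vertices L p M \<Longrightarrow> \<gamma> x = g_p d L p (layer_perm_of L p \<gamma>) x"
  by (auto simp: fp_vertices_def iso_Inl g_p_Inl iso_Inr g_p_Inr)

lemma ml_act_layer_perm_of: "ml_act (layer_perm_of L p \<gamma>) M = M'"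
proof -
  have "f_p d L p M' = cg_act \<gamma> (f_p d L p M)"
    by (rule act[symmetric])
  also have "\<dots> = cg_act (g_p d L p (layer_perm_of L p \<gamma>)) (f_p d L p M)"
    unfolding f_p_eq by (rule cg_act_cong[OF fp_edges_subset[OF M] iso_eq_g_p])
  also have "\<dots> = f_p d L p (ml_act (layer_perm_of L p \<gamma>) M)"
    using layer_perm_of_Pp M by (rule cg_act_g_p)
  finally show ?thesis
    using inj_f_p by (metis injD)
qed

end

lemma ml_iso_p_iff_cg_iso:
  assumes M: "mlnet d L M" and M': "mlnet d L M'"
  shows "ml_iso_p d L p M M' \<longleftrightarrow> cg_iso (f_p d L p M) (f_p d L p M')"
proof
  assume "ml_iso_p d L p M M'"
  then obtain z where "z \<in> Pp d L p" "ml_act z M = M'"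
    unfolding ml_iso_p_def by blast
  with bij_betw_g_p cg_act_g_p[OF _ M] show "cg_iso (f_p d L p M) (f_p d L p M')"
    unfolding cg_iso_def fst_f_p by blast
next
  assume "cg_iso (f_p d L p M) (f_p d L p M')"
  then obtain \<gamma> where "bij_betw \<gamma> (fp_vertices L p M) (fp_vertices L p M')"
      "cg_act \<gamma> (f_p d L p M) = f_p d L p M'"
    unfolding cg_iso_def by auto
  with layer_perm_of_Pp ml_act_layer_perm_of show "ml_iso_p d L p M M'"
    unfolding ml_iso_p_def using M M' by blast
qed

lemma Aut_p_eq:
  assumes M: "mlnet d L M"
  shows "Aut_p d L p M = {\<zeta> \<in> Pp d L p. g_p d L p \<zeta> \<in> cg_Aut (f_p d L p M)}"
proof (intro set_eqI iffI)
  fix z assume "z \<in> Aut_p d L p M"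
  then have z: "z \<in> Pp d L p" and fixed: "ml_act z M = M"
    unfolding Aut_p_def by auto
  have "bij_betw (g_p d L p z) (fp_vertices L p M) (fp_vertices L p M)"
    using bij_betw_g_p[OF z, of M] fixed by simp
  moreover have "cg_act (g_p d L p z) (f_p d L p M) = f_p d L p M"
    using cg_act_g_p[OF z M] fixed by simp
  ultimately show "z \<in> {\<zeta> \<in> Pp d L p. g_p d L p \<zeta> \<in> cg_Aut (f_p d L p M)}"
    using z unfolding cg_Aut_def by simp
next
  fix z assume "z \<in> {\<zeta> \<in> Pp d L p. g_p d L p \<zeta> \<in> cg_Aut (f_p d L p M)}"
  then have z: "z \<in> Pp d L p" and "cg_act (g_p d L p z) (f_p d L p M) = f_p d L p M"
    unfolding cg_Aut_def by auto
  then have "f_p d L p (ml_act z M) = f_p d L p M"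
    using cg_act_g_p[OF z M] by simp
  with z show "z \<in> Aut_p d L p M"
    unfolding Aut_p_def using inj_f_p by (auto dest: injD)
qed

end

theorem corollary1:
  fixes d :: nat and L :: "nat \<Rightarrow> 'a set" and p :: "nat set"
  assumes disj: "\<And>a b. a \<le> d \<Longrightarrow> b \<le> d \<Longrightarrow> a \<noteq> b \<Longrightarrow> L a \<inter> L b = {}"
    and p_sub: "p \<subseteq> {..d}" and p_ne: "p \<noteq> {}"
  shows
    "(\<forall>M M'. mlnet d L M \<longrightarrow> mlnet d L M' \<longrightarrow>
        (ml_iso_p d L p M M' \<longleftrightarrow> cg_iso (f_p d L p M) (f_p d L p M')))
   \<and> (\<forall>CG :: ('a list + 'a, nat + 'a list) cgraph \<Rightarrow> 'b.
        (\<forall>G G'. cg_wf G \<longrightarrow> cg_wf G' \<longrightarrow> (CG G = CG G' \<longleftrightarrow> cg_iso G G')) \<longrightarrow>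
        (\<forall>M M'. mlnet d L M \<longrightarrow> mlnet d L M' \<longrightarrow>
           (CG (f_p d L p M) = CG (f_p d L p M') \<longleftrightarrow> ml_iso_p d L p M M')))
   \<and> (\<forall>M. mlnet d L M \<longrightarrow>
        Aut_p d L p M = {\<zeta> \<in> Pp d L p. g_p d L p \<zeta> \<in> cg_Aut (f_p d L p M)})"
proof -
  interpret disjoint_layers d L p
    using disj p_sub by unfold_locales
  show ?thesis
    using ml_iso_p_iff_cg_iso cg_wf_f_p Aut_p_eq by blast
qed

end
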